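(* Let $\mathcal{O}$ be an order in $B_p$. Let $\beta_1,\beta_2,\beta_3\in\mathcal{O}^T$ be linearly independent, and let $\alpha_1,\alpha_2,\alpha_3\in\mathcal{O}$ satisfy $2\alpha_i-\mathrm{Tr}(\alpha_i)=\beta_i$ and $\mathrm{Tr}(\alpha_i)\in\{0,1\}$ for each $i$. The following are equivalent: (a) $\beta_1,\beta_2,\beta_3$ attain the successive minima of $\mathcal{O}^T$. (b) $1,\alpha_1,\alpha_2,\alpha_3$ attain the successive minima of $\mathcal{O}$, and whenever $\mathrm{Tr}(\alpha_i)=0$ for some $i\in\{1,2,3\}$, every $\gamma\in\mathcal{O}$ with $N(\gamma)=N(\alpha_i)$ that is linearly independent from $1,\alpha_1,\dots,\alpha_{i-1}$ satisfies $\mathrm{Tr}(\gamma)=0$.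
   Context: $B_p$ is the quaternion algebra over $\mathbb{Q}$ ramified exactly at the prime $p$ and $\infty$, with canonical involution $\overline{x}$, reduced norm $N(x)=x\overline{x}$, reduced trace $\mathrm{Tr}(x)=x+\overline{x}$. The Gross lattice is $\mathcal{O}^T=\{2x-\mathrm{Tr}(x):x\in\mathcal{O}\}$. Both $\mathcal{O}$ (rank 4) and $\mathcal{O}^T$ (rank 3) carry the positive definite quadratic form $N$. For a lattice $\Lambda$ of rank $k$ with positive definite quadratic form $Q$, the $i$-th successive minimum is the minimum value $D_i$ such that the $\mathbb{Z}$-module generated by $\{v\in\Lambda:Q(v)\le D_i\}$ has rank at least $i$; a list $v_1,\dots,v_k$ attains the successive minima if it is linearly independent and $Q(v_i)=D_i$ for each $i$. *)

theory Defs
  imports "HOL-Number_Theory.Number_Theory"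
begin

text \<open>Elements of the rational quaternion algebra (a,b)_Q, written
  x0 + x1 i + x2 j + x3 k with i^2 = a, j^2 = b, k = ij = -ji.\<close>
datatype quat = Quat (re: rat) (ci: rat) (cj: rat) (ck: rat)

definition qone :: quat where "qone = Quat 1 0 0 0"
definition qzero :: quat where "qzero = Quat 0 0 0 0"

definition qscalar :: "rat \<Rightarrow> quat" where "qscalar c = Quat c 0 0 0"

definition qadd :: "quat \<Rightarrow> quat \<Rightarrow> quat" where
  "qadd x y = Quat (re x + re y) (ci x + ci y) (cj x + cj y) (ck x + ck y)"

definition qsub :: "quat \<Rightarrow> quat \<Rightarrow> quat" where
  "qsub x y = Quat (re x - re y) (ci x - ci y) (cj x - cj y) (ck x - ck y)"

definition qscale :: "rat \<Rightarrow> quat \<Rightarrow> quat" where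
  "qscale c x = Quat (c * re x) (c * ci x) (c * cj x) (c * ck x)"

definition qmul :: "int \<Rightarrow> int \<Rightarrow> quat \<Rightarrow> quat \<Rightarrow> quat" where
  "qmul a b x y = Quat
     (re x * re y + of_int a * ci x * ci y + of_int b * cj x * cj y - of_int (a*b) * ck x * ck y)
     (re x * ci y + ci x * re y - of_int b * cj x * ck y + of_int b * ck x * cj y)
     (re x * cj y + cj x * re y + of_int a * ci x * ck y - of_int a * ck x * ci y)
     (re x * ck y + ck x * re y + ci x * cj y - cj x * ci y)"

definition qconj :: "quat \<Rightarrow> quat" where
  "qconj x = Quat (re x) (- ci x) (- cj x) (- ck x)"

definition qtr :: "quat \<Rightarrow> rat" where "qtr x = 2 * re x"

definition qnorm :: "int \<Rightarrow> int \<Rightarrow> quat \<Rightarrow> rat" where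
  "qnorm a b x = (re x)^2 - of_int a * (ci x)^2 - of_int b * (cj x)^2 + of_int (a*b) * (ck x)^2"

definition lincomb :: "(nat \<Rightarrow> rat) \<Rightarrow> quat list \<Rightarrow> quat" where
  "lincomb c vs = Quat (\<Sum>i<length vs. c i * re (vs!i)) (\<Sum>i<length vs. c i * ci (vs!i))
                       (\<Sum>i<length vs. c i * cj (vs!i)) (\<Sum>i<length vs. c i * ck (vs!i))"

definition lin_indep :: "quat list \<Rightarrow> bool" where
  "lin_indep vs \<longleftrightarrow> (\<forall>c. lincomb c vs = qzero \<longrightarrow> (\<forall>i<length vs. c i = 0))"

definition zspan :: "quat list \<Rightarrow> quat set" where
  "zspan vs = {lincomb (\<lambda>i. of_int (n i)) vs | n. True}"

definition is_order :: "int \<Rightarrow> int \<Rightarrow> quat set \<Rightarrow> bool" where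
  "is_order a b Ord \<longleftrightarrow> (\<exists>vs. length vs = 4 \<and> lin_indep vs \<and> Ord = zspan vs) \<and>
     qone \<in> Ord \<and> (\<forall>x\<in>Ord. \<forall>y\<in>Ord. qmul a b x y \<in> Ord)"

definition gross_map :: "quat \<Rightarrow> quat" where
  "gross_map x = qsub (qscale 2 x) (qscalar (qtr x))"

definition gross_lattice :: "quat set \<Rightarrow> quat set" where
  "gross_lattice Ord = gross_map ` Ord"

text \<open>Local Hilbert symbol (a,b)_l = 1 at a prime l: z^2 = a x^2 + b y^2 has a nontrivial
  solution in Q_l, equivalently (compactness of the primitive vectors in Z_l^3) a primitive
  solution modulo every power of l.\<close>
definition hilbert_trivial_at :: "nat \<Rightarrow> int \<Rightarrow> int \<Rightarrow> bool" where
  "hilbert_trivial_at l a b \<longleftrightarrow> (\<forall>k::nat. \<exists>x y z :: int.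
      \<not> (int l dvd x \<and> int l dvd y \<and> int l dvd z) \<and>
      [a * x^2 + b * y^2 = z^2] (mod (int l ^ k)))"

definition ramified_infty :: "int \<Rightarrow> int \<Rightarrow> bool" where
  "ramified_infty a b \<longleftrightarrow> a < 0 \<and> b < 0"

definition is_Bp :: "nat \<Rightarrow> int \<Rightarrow> int \<Rightarrow> bool" where
  "is_Bp p a b \<longleftrightarrow> a \<noteq> 0 \<and> b \<noteq> 0 \<and> ramified_infty a b \<and> \<not> hilbert_trivial_at p a b \<and>
     (\<forall>l. prime l \<and> l \<noteq> p \<longrightarrow> hilbert_trivial_at l a b)"

definition rank_ge :: "quat set \<Rightarrow> nat \<Rightarrow> bool" where
  "rank_ge S i \<longleftrightarrow> (\<exists>vs. length vs = i \<and> set vs \<subseteq> S \<and> lin_indep vs)"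

definition is_succ_min :: "(quat \<Rightarrow> rat) \<Rightarrow> quat set \<Rightarrow> nat \<Rightarrow> rat \<Rightarrow> bool" where
  "is_succ_min Q L i D \<longleftrightarrow> rank_ge {v\<in>L. Q v \<le> D} i \<and>
     (\<forall>D'. rank_ge {v\<in>L. Q v \<le> D'} i \<longrightarrow> D \<le> D')"

definition attains_succ_min :: "(quat \<Rightarrow> rat) \<Rightarrow> quat set \<Rightarrow> nat \<Rightarrow> quat list \<Rightarrow> bool" where
  "attains_succ_min Q L k vs \<longleftrightarrow> length vs = k \<and> set vs \<subseteq> L \<and> lin_indep vs \<and>
     (\<forall>i<k. is_succ_min Q L (Suc i) (Q (vs!i)))"

end

theory Submission
  imports Defs
begin

text \<open>The Gross map \<open>g x = 2 x - Tr x\<close> maps \<open>O\<close> onto \<open>O\<^sup>T\<close>, satisfies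
  \<open>N (g x) = 4 N x - (Tr x)\<^sup>2\<close> and kills exactly the rational multiples of \<open>1\<close>, so
  \<open>1, x\<^sub>1, ..., x\<^sub>k\<close> are independent iff \<open>g x\<^sub>1, ..., g x\<^sub>k\<close> are.
  A list attains the successive minima iff each entry has least norm among the lattice vectors
  independent of its predecessors, which splits both sides of the equivalence into separate
  conditions on each \<open>\<alpha>\<^sub>i\<close>. Since \<open>O\<close> is a ring, traces and norms on \<open>O\<close> are integers, and every
  element of \<open>O\<^sup>T\<close> lifts to an element of \<open>O\<close> of trace \<open>0\<close> or \<open>1\<close>. For \<open>\<alpha>\<^sub>i\<close> of trace
  \<open>t\<^sub>i \<in> {0, 1}\<close> we have \<open>N \<beta>\<^sub>i = 4 N \<alpha>\<^sub>i - t\<^sub>i\<close>, so \<open>\<beta>\<^sub>i\<close> has least norm iff \<open>\<alpha>\<^sub>i\<close> does,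
  with ties broken in favour of trace \<open>0\<close>: that tie-break is the extra condition in (b).
  Finally \<open>1\<close> attains the first minimum of \<open>O\<close> because \<open>B\<^sub>p\<close> is definite, which is the only
  property of \<open>B\<^sub>p\<close> that is used.\<close>

section \<open>Quaternions as a rational vector space\<close>

instantiation quat :: ab_group_add
begin
definition zero_quat_def: "0 = qzero"
definition plus_quat_def: "x + y = qadd x y"
definition minus_quat_def: "x - y = qsub x y"
definition uminus_quat_def: "- x = Quat (- re x) (- ci x) (- cj x) (- ck x)"
instance
  by standard (auto simp: zero_quat_def plus_quat_def minus_quat_def uminus_quat_def
      qzero_def qadd_def qsub_def quat.expand)
end

lemma quat_eq_iff: "x = y \<longleftrightarrow> re x = re y \<and> ci x = ci y \<and> cj x = cj y \<and> ck x = ck y"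
  using quat.expand by auto

lemma quat_components [simp]:
  "re 0 = 0" "ci 0 = 0" "cj 0 = 0" "ck 0 = 0"
  "re (x + y) = re x + re y" "ci (x + y) = ci x + ci y" "cj (x + y) = cj x + cj y" "ck (x + y) = ck x + ck y"
  "re (x - y) = re x - re y" "ci (x - y) = ci x - ci y" "cj (x - y) = cj x - cj y" "ck (x - y) = ck x - ck y"
  "re (- x) = - re x" "ci (- x) = - ci x" "cj (- x) = - cj x" "ck (- x) = - ck x"
  "re (qscale c x) = c * re x" "ci (qscale c x) = c * ci x" "cj (qscale c x) = c * cj x" "ck (qscale c x) = c * ck x"
  "re qone = 1" "ci qone = 0" "cj qone = 0" "ck qone = 0"
  "re (qscalar r) = r" "ci (qscalar r) = 0" "cj (qscalar r) = 0" "ck (qscalar r) = 0"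
  "re qzero = 0" "ci qzero = 0" "cj qzero = 0" "ck qzero = 0"
  by (simp_all add: zero_quat_def plus_quat_def minus_quat_def uminus_quat_def
      qzero_def qadd_def qsub_def qscale_def qone_def qscalar_def)

lemma quat_components_sum [simp]:
  "re (sum f A) = (\<Sum>x\<in>A. re (f x))" "ci (sum f A) = (\<Sum>x\<in>A. ci (f x))"
  "cj (sum f A) = (\<Sum>x\<in>A. cj (f x))" "ck (sum f A) = (\<Sum>x\<in>A. ck (f x))"
  by (induct A rule: infinite_finite_induct) auto

lemma qzero_eq_zero: "qzero = 0"
  by (simp add: zero_quat_def)

interpretation qv: vector_space qscale
  by unfold_locales (auto simp: quat_eq_iff algebra_simps)

definition qI :: quat where "qI = Quat 0 1 0 0"
definition qJ :: quat where "qJ = Quat 0 0 1 0"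
definition qK :: quat where "qK = Quat 0 0 0 1"

lemma quat_decompose: "x = qscale (re x) qone + qscale (ci x) qI + qscale (cj x) qJ + qscale (ck x) qK"
  by (simp add: quat_eq_iff qI_def qJ_def qK_def)

lemma lincomb_eq_sum: "lincomb c vs = (\<Sum>i<length vs. qscale (c i) (vs!i))"
  by (simp add: lincomb_def quat_eq_iff)

lemma lincomb_Cons: "lincomb c (x # xs) = qscale (c 0) x + lincomb (\<lambda>i. c (Suc i)) xs"
  unfolding lincomb_eq_sum length_Cons sum.lessThan_Suc_shift by simp

lemma sum_set_eq_sum_nth: "distinct vs \<Longrightarrow> (\<Sum>v\<in>set vs. f v) = (\<Sum>i<length vs. f (vs!i))"
  by (simp add: sum.distinct_set_conv_list sum_list_sum_nth lessThan_atLeast0)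

lemma lin_indep_iff_independent: "lin_indep vs \<longleftrightarrow> distinct vs \<and> qv.independent (set vs)"
proof
  assume L: "lin_indep vs"
  have D: "distinct vs"
  proof (rule ccontr)
    assume "\<not> distinct vs"
    then obtain i j where ij: "i < length vs" "j < length vs" "i \<noteq> j" "vs!i = vs!j"
      by (auto simp: distinct_conv_nth)
    define c where "c = (\<lambda>k. if k = i then (1::rat) else if k = j then -1 else 0)"
    have "lincomb c vs = (\<Sum>k\<in>{i,j}. qscale (c k) (vs!k))"
      unfolding lincomb_eq_sum by (rule sum.mono_neutral_right) (use ij in \<open>auto simp: c_def\<close>)
    also have "\<dots> = qzero"
      using ij by (simp add: c_def quat_eq_iff)
    finally have "c i = 0"
      using L ij(1) unfolding lin_indep_def by blast
    then show False
      by (simp add: c_def)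
  qed
  have "u v = 0" if S: "(\<Sum>v\<in>set vs. qscale (u v) v) = 0" and v: "v \<in> set vs" for u v
  proof -
    have "lincomb (\<lambda>i. u (vs!i)) vs = (\<Sum>v\<in>set vs. qscale (u v) v)"
      by (simp add: lincomb_eq_sum sum_set_eq_sum_nth[OF D])
    then have "lincomb (\<lambda>i. u (vs!i)) vs = qzero"
      using S by (simp add: qzero_eq_zero)
    then show ?thesis
      using L v by (auto simp: lin_indep_def in_set_conv_nth)
  qed
  then show "distinct vs \<and> qv.independent (set vs)"
    using D qv.dependent_finite[of "set vs"] by auto
next
  assume A: "distinct vs \<and> qv.independent (set vs)"
  show "lin_indep vs"
    unfolding lin_indep_def
  proof (intro allI impI)
    fix c i assume c: "lincomb c vs = qzero" and i: "i < length vs"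
    define u where "u v = c (LEAST k. k < length vs \<and> vs!k = v)" for v
    have u: "u (vs!k) = c k" if "k < length vs" for k
    proof -
      have "(LEAST k'. k' < length vs \<and> vs!k' = vs!k) = k"
        using A that by (intro Least_equality) (auto simp: nth_eq_iff_index_eq)
      then show ?thesis
        by (simp add: u_def)
    qed
    have "(\<Sum>v\<in>set vs. qscale (u v) v) = lincomb c vs"
      using A by (simp add: sum_set_eq_sum_nth lincomb_eq_sum u)
    then have "u (vs!i) = 0"
      using A c i qv.dependent_finite[of "set vs"] by (metis List.finite_set nth_mem qzero_eq_zero)
    then show "c i = 0"
      using u i by simp
  qed
qed

lemma lin_indep_subset: "lin_indep xs \<Longrightarrow> distinct ys \<Longrightarrow> set ys \<subseteq> set xs \<Longrightarrow> lin_indep ys"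
  unfolding lin_indep_iff_independent using qv.independent_mono by blast

lemma lin_indep_take: "lin_indep xs \<Longrightarrow> lin_indep (take k xs)"
  by (rule lin_indep_subset) (auto simp: lin_indep_iff_independent distinct_take dest: in_set_takeD)

lemma lin_indep_take_snoc_mono:
  assumes "lin_indep (take i xs @ [w])" "j \<le> i"
  shows "lin_indep (take j xs @ [w])"
proof (rule lin_indep_subset[OF assms(1)])
  have "take j xs = take j (take i xs)"
    using assms(2) by (simp add: min_def)
  then have "set (take j xs) \<subseteq> set (take i xs)" "distinct (take i xs) \<Longrightarrow> distinct (take j xs)"
    by (metis set_take_subset, metis distinct_take)
  then show "distinct (take j xs @ [w])" "set (take j xs @ [w]) \<subseteq> set (take i xs @ [w])"
    using assms(1) by (auto simp: lin_indep_iff_independent distinct_take)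
qed

lemma lin_indep_take_snoc_nth:
  assumes "lin_indep xs" "j \<le> i" "i < length xs"
  shows "lin_indep (take j xs @ [xs!i])"
proof (rule lin_indep_subset[OF assms(1)])
  have "distinct xs"
    using assms(1) by (simp add: lin_indep_iff_independent)
  then have "xs!i \<notin> set (take j xs)"
    using assms(2,3) by (auto simp: in_set_conv_nth nth_eq_iff_index_eq)
  then show "distinct (take j xs @ [xs!i])"
    using \<open>distinct xs\<close> by (simp add: distinct_take)
  show "set (take j xs @ [xs!i]) \<subseteq> set xs"
    using assms(3) by (auto dest: in_set_takeD)
qed

lemma lin_indep_nonzero: "lin_indep [x] \<Longrightarrow> x \<noteq> 0"
  using qv.dependent_zero by (auto simp: lin_indep_iff_independent)

lemma lin_indep_snoc_exchange:
  assumes "lin_indep us" "lin_indep ws" "length us < length ws"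
  obtains w where "w \<in> set ws" "lin_indep (us @ [w])"
proof -
  have "set ws \<subseteq> qv.span (set us)" if none: "\<forall>w\<in>set ws. \<not> lin_indep (us @ [w])"
  proof
    fix w assume w: "w \<in> set ws"
    show "w \<in> qv.span (set us)"
    proof (rule ccontr)
      assume "w \<notin> qv.span (set us)"
      then have "lin_indep (us @ [w])"
        using assms(1) qv.span_base[of w] qv.independent_insertI[of w "set us"]
        by (auto simp: lin_indep_iff_independent)
      with none w show False by blast
    qed
  qed
  moreover have "\<not> card (set ws) \<le> card (set us)"
    using assms by (auto simp: lin_indep_iff_independent distinct_card)
  ultimately show thesis
    using that assms qv.independent_span_bound[of "set us" "set ws"]
    by (auto simp: lin_indep_iff_independent)
qed

lemma lin_indep_lincomb_unique:
  assumes "lin_indep vs" "lincomb c vs = lincomb d vs" "k < length vs"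
  shows "c k = d k"
proof -
  have "lincomb (\<lambda>i. c i - d i) vs = qzero"
    using assms(2) by (simp add: lincomb_def quat_eq_iff sum_subtractf left_diff_distrib)
  then show ?thesis
    using assms(1,3) unfolding lin_indep_def by fastforce
qed

lemma lin_indep_four_spans:
  assumes "lin_indep vs" "length vs = 4"
  shows "\<exists>c. x = lincomb c vs"
proof -
  have "x \<in> qv.span (set vs)"
  proof (rule ccontr)
    assume x: "x \<notin> qv.span (set vs)"
    have "y \<in> qv.span {qone, qI, qJ, qK}" for y
      by (subst quat_decompose) (intro qv.span_add qv.span_scale qv.span_base; simp)
    moreover have "qv.independent (insert x (set vs))"
      using assms(1) x by (intro qv.independent_insertI) (auto simp: lin_indep_iff_independent)
    ultimately have "card (insert x (set vs)) \<le> card {qone, qI, qJ, qK}"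
      using qv.independent_span_bound[of "{qone, qI, qJ, qK}" "insert x (set vs)"] by auto
    moreover have "card {qone, qI, qJ, qK} \<le> 4"
      using card_length[of "[qone, qI, qJ, qK]"] by simp
    moreover have "x \<notin> set vs"
      using x qv.span_base by blast
    ultimately show False
      using assms by (simp add: lin_indep_iff_independent distinct_card)
  qed
  then obtain u where "x = (\<Sum>v\<in>set vs. qscale (u v) v)"
    using qv.span_finite[of "set vs"] by auto
  then have "x = lincomb (\<lambda>i. u (vs!i)) vs"
    using assms(1) by (simp add: lincomb_eq_sum sum_set_eq_sum_nth lin_indep_iff_independent)
  then show ?thesis
    by blast
qed

section \<open>Successive minima\<close>

lemma succ_min_le_if_lin_indep:
  assumes succ_min: "\<forall>j\<le>i. is_succ_min Q L (Suc j) (Q (vs!j))"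
    and "set vs \<subseteq> L" "i < length vs" "w \<in> L" "lin_indep (take i vs @ [w])"
  shows "Q (vs!i) \<le> Q w"
proof -
  have "Q (vs!j) \<le> Q w" if "j \<le> i" for j
    using that
  proof (induction j rule: less_induct)
    case (less j)
    have "vs!l \<in> {v \<in> L. Q v \<le> Q w}" if "l < j" for l
      using less that assms(2,3) by auto
    then have "set (take j vs @ [w]) \<subseteq> {v \<in> L. Q v \<le> Q w}"
      using assms(4) by (auto simp: in_set_conv_nth)
    moreover have "lin_indep (take j vs @ [w])"
      using assms(5) less.prems by (rule lin_indep_take_snoc_mono)
    moreover have "length (take j vs @ [w]) = Suc j"
      using less.prems assms(3) by simp
    ultimately have "rank_ge {v \<in> L. Q v \<le> Q w} (Suc j)"
      unfolding rank_ge_def by blast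
    then show ?case
      using succ_min less.prems unfolding is_succ_min_def by blast
  qed
  then show ?thesis
    by simp
qed

lemma succ_min_if_greedy:
  assumes greedy: "\<forall>i<length vs. \<forall>w\<in>L. lin_indep (take i vs @ [w]) \<longrightarrow> Q (vs!i) \<le> Q w"
    and "set vs \<subseteq> L" "lin_indep vs" "i < length vs"
  shows "is_succ_min Q L (Suc i) (Q (vs!i))"
proof -
  have "vs!i \<in> L"
    using assms(2,4) nth_mem by blast
  then have "Q (vs!j) \<le> Q (vs!i)" if "j \<le> i" for j
    using greedy[rule_format, of j "vs!i"] assms(4) that lin_indep_take_snoc_nth[OF assms(3) that assms(4)]
    by simp
  then have "set (take (Suc i) vs) \<subseteq> {v \<in> L. Q v \<le> Q (vs!i)}"
    using assms(2) nth_mem by (fastforce simp: in_set_conv_nth less_Suc_eq_le)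
  then have "rank_ge {v \<in> L. Q v \<le> Q (vs!i)} (Suc i)"
    unfolding rank_ge_def using assms(3,4) lin_indep_take
    by (intro exI[of _ "take (Suc i) vs"]) auto
  moreover have "Q (vs!i) \<le> D" if rank: "rank_ge {v \<in> L. Q v \<le> D} (Suc i)" for D
  proof -
    obtain ws where ws: "length ws = Suc i" "set ws \<subseteq> {v \<in> L. Q v \<le> D}" "lin_indep ws"
      using rank unfolding rank_ge_def by blast
    have "length (take i vs) < length ws"
      using ws(1) by simp
    then obtain w where "w \<in> set ws" "lin_indep (take i vs @ [w])"
      by (rule lin_indep_snoc_exchange[OF lin_indep_take[OF assms(3)] ws(3)])
    then show ?thesis
      using greedy assms(4) ws(2) by fastforce
  qed
  ultimately show ?thesis
    unfolding is_succ_min_def by blast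
qed

lemma attains_succ_min_iff_greedy:
  "attains_succ_min Q L k vs \<longleftrightarrow> length vs = k \<and> set vs \<subseteq> L \<and> lin_indep vs \<and>
     (\<forall>i<k. \<forall>w\<in>L. lin_indep (take i vs @ [w]) \<longrightarrow> Q (vs!i) \<le> Q w)"
proof -
  have "(\<forall>i<length vs. is_succ_min Q L (Suc i) (Q (vs!i))) \<longleftrightarrow>
      (\<forall>i<length vs. \<forall>w\<in>L. lin_indep (take i vs @ [w]) \<longrightarrow> Q (vs!i) \<le> Q w)"
    if "set vs \<subseteq> L" "lin_indep vs"
    using succ_min_le_if_lin_indep[of _ Q L vs] succ_min_if_greedy[of vs L Q] that by auto
  then show ?thesis
    unfolding attains_succ_min_def by blast
qed

section \<open>The Gross map\<close>

lemma gross_map_qnorm: "qnorm a b (gross_map x) = 4 * qnorm a b x - (qtr x)^2"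
  by (simp add: gross_map_def qnorm_def qtr_def qsub_def power2_eq_square algebra_simps)

lemma gross_map_components [simp]:
  "re (gross_map x) = 0" "ci (gross_map x) = 2 * ci x" "cj (gross_map x) = 2 * cj x" "ck (gross_map x) = 2 * ck x"
  by (simp_all add: gross_map_def qtr_def qsub_def)

lemma gross_map_lincomb: "gross_map (lincomb c xs) = lincomb c (map gross_map xs)"
  by (simp add: quat_eq_iff lincomb_def sum_distrib_left mult.left_commute)

text \<open>The kernel of the Gross map is the line through \<open>1\<close>.\<close>
lemma lin_indep_one_Cons_iff: "lin_indep (qone # xs) \<longleftrightarrow> lin_indep (map gross_map xs)"
proof
  assume L: "lin_indep (qone # xs)"
  show "lin_indep (map gross_map xs)"
    unfolding lin_indep_def
  proof (intro allI impI)
    fix d i assume d: "lincomb d (map gross_map xs) = qzero" and i: "i < length (map gross_map xs)"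
    define c where "c k = (if k = 0 then - re (lincomb d xs) else d (k - 1))" for k
    have "lincomb c (qone # xs) = qzero"
      using d by (simp add: lincomb_Cons c_def quat_eq_iff flip: gross_map_lincomb)
    then show "d i = 0"
      using L i unfolding lin_indep_def c_def by fastforce
  qed
next
  assume L: "lin_indep (map gross_map xs)"
  show "lin_indep (qone # xs)"
    unfolding lin_indep_def
  proof (intro allI impI)
    fix c i assume c: "lincomb c (qone # xs) = qzero" and i: "i < length (qone # xs)"
    have "lincomb (\<lambda>i. c (Suc i)) (map gross_map xs) = gross_map (lincomb c (qone # xs))"
      by (simp add: lincomb_Cons quat_eq_iff flip: gross_map_lincomb)
    also have "\<dots> = qzero"
      using c by (simp add: quat_eq_iff)
    finally have "\<forall>k<length (map gross_map xs). c (Suc k) = 0"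
      using L unfolding lin_indep_def by blast
    then have tail: "\<forall>k<length xs. c (Suc k) = 0"
      by simp
    then have "lincomb (\<lambda>i. c (Suc i)) xs = qzero"
      by (simp add: lincomb_def quat_eq_iff)
    then have "c 0 = 0"
      using c by (simp add: lincomb_Cons quat_eq_iff)
    then show "c i = 0"
      using tail i by (cases i) auto
  qed
qed

section \<open>Orders and their Gross lattices\<close>

lemma in_zspanI: "x = lincomb (\<lambda>i. of_int (n i)) vs \<Longrightarrow> x \<in> zspan vs"
  by (auto simp: zspan_def)

lemma zspan_add: "x \<in> zspan vs \<Longrightarrow> y \<in> zspan vs \<Longrightarrow> x + y \<in> zspan vs"
proof -
  assume "x \<in> zspan vs" "y \<in> zspan vs"
  then obtain n m where "x = lincomb (\<lambda>i. of_int (n i)) vs" "y = lincomb (\<lambda>i. of_int (m i)) vs"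
    by (auto simp: zspan_def)
  then have "x + y = lincomb (\<lambda>i. of_int (n i + m i)) vs"
    by (simp add: lincomb_def quat_eq_iff sum.distrib distrib_right)
  then show ?thesis
    by (rule in_zspanI)
qed

lemma zspan_scale_of_int: "x \<in> zspan vs \<Longrightarrow> qscale (of_int k) x \<in> zspan vs"
proof -
  assume "x \<in> zspan vs"
  then obtain n where "x = lincomb (\<lambda>i. of_int (n i)) vs"
    by (auto simp: zspan_def)
  then have "qscale (of_int k) x = lincomb (\<lambda>i. of_int (k * n i)) vs"
    by (simp add: lincomb_def quat_eq_iff sum_distrib_left mult.assoc)
  then show ?thesis
    by (rule in_zspanI)
qed

lemma zspan_diff: "x \<in> zspan vs \<Longrightarrow> y \<in> zspan vs \<Longrightarrow> x - y \<in> zspan vs"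
  using zspan_add[of x vs "qscale (of_int (-1)) y"] zspan_scale_of_int[of y vs "-1"]
  by (simp add: quat_eq_iff)

lemma nth_in_zspan: "k < length vs \<Longrightarrow> vs!k \<in> zspan vs"
proof -
  assume k: "k < length vs"
  have delta: "(\<Sum>i<length vs. of_int (if i = k then 1 else 0) * f i) = f k" for f :: "nat \<Rightarrow> rat"
    using k by (simp add: if_distrib[of of_int] if_distrib[of "\<lambda>c. c * _"] cong: if_cong)
  have "vs!k = lincomb (\<lambda>i. of_int (if i = k then 1 else 0)) vs"
    by (simp add: lincomb_def quat_eq_iff delta)
  then show ?thesis
    by (rule in_zspanI)
qed

definition coords :: "quat list \<Rightarrow> quat \<Rightarrow> nat \<Rightarrow> rat" where
  "coords vs x = (SOME c. x = lincomb c vs)"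

context
  fixes vs :: "quat list"
  assumes basis: "lin_indep vs" "length vs = 4"
begin

lemma lincomb_coords: "lincomb (coords vs x) vs = x"
  unfolding coords_def using lin_indep_four_spans[OF basis] by (metis (mono_tags) someI_ex)

lemma coords_lincomb: "k < 4 \<Longrightarrow> coords vs (lincomb c vs) k = c k"
  using lin_indep_lincomb_unique[OF basis(1)] lincomb_coords basis(2) by simp

lemma coords_add: "k < 4 \<Longrightarrow> coords vs (x + y) k = coords vs x k + coords vs y k"
proof -
  assume k: "k < 4"
  have "x + y = lincomb (\<lambda>i. coords vs x i + coords vs y i) vs"
    using lincomb_coords[of x] lincomb_coords[of y]
    by (simp add: lincomb_def quat_eq_iff sum.distrib distrib_right)
  then show ?thesis
    using coords_lincomb[OF k] by metis
qed

lemma coords_scale: "k < 4 \<Longrightarrow> coords vs (qscale c x) k = c * coords vs x k"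
proof -
  assume k: "k < 4"
  have "qscale c x = lincomb (\<lambda>i. c * coords vs x i) vs"
    using lincomb_coords[of x] by (simp add: lincomb_def quat_eq_iff mult.assoc flip: sum_distrib_left)
  then show ?thesis
    using coords_lincomb[OF k] by metis
qed

lemma coords_zspan_Ints: "x \<in> zspan vs \<Longrightarrow> k < 4 \<Longrightarrow> coords vs x k \<in> \<int>"
  by (auto simp: zspan_def coords_lincomb)

text \<open>The trace of left multiplication by \<open>y\<close>, computed in the basis \<open>vs\<close>; in the
  standard basis it is visibly \<open>4 * re y\<close>.\<close>
lemma trace_left_mult: "(\<Sum>k<4. coords vs (qmul a b y (vs!k)) k) = 4 * re y"
proof -
  let ?c = "\<lambda>e. coords vs (qmul a b y e)"
  have mult_right: "qmul a b y w = qscale (re w) (qmul a b y qone) + qscale (ci w) (qmul a b y qI)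
      + qscale (cj w) (qmul a b y qJ) + qscale (ck w) (qmul a b y qK)" for w
    by (simp add: quat_eq_iff qmul_def qI_def qJ_def qK_def algebra_simps)
  have "(\<Sum>k<4. ?c (vs!k) k) = (\<Sum>k<4. re (vs!k) * ?c qone k + ci (vs!k) * ?c qI k
        + cj (vs!k) * ?c qJ k + ck (vs!k) * ?c qK k)"
    by (intro sum.cong refl, subst mult_right) (simp add: coords_add coords_scale)
  also have "\<dots> = re (lincomb (?c qone) vs) + ci (lincomb (?c qI) vs)
      + cj (lincomb (?c qJ) vs) + ck (lincomb (?c qK) vs)"
    by (simp add: lincomb_def basis(2) sum.distrib mult.commute)
  also have "\<dots> = 4 * re y"
    by (simp add: lincomb_coords qmul_def qI_def qJ_def qK_def qone_def)
  finally show ?thesis .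
qed

end

lemma Ints_less_imp_add_one_le:
  fixes x y :: "'a::linordered_idom"
  assumes "x \<in> \<int>" "y \<in> \<int>" "x < y"
  shows "x + 1 \<le> y"
  using Ints_nonzero_abs_ge1[of "y - x"] assms by simp

lemma rat_Ints_if_four_cube_Ints:
  fixes r :: rat
  assumes "4 * r^3 \<in> \<int>"
  shows "r \<in> \<int>"
proof -
  obtain u w where r: "r = Fract u w" and w: "0 < w" and cop: "coprime u w"
    by (rule Rat_cases)
  obtain m where m: "4 * r^3 = of_int m"
    using assms Ints_cases by blast
  have "of_int (4 * u^3) = (of_int (m * w^3) :: rat)"
    using m w by (simp add: r Fract_of_int_quotient field_simps power_divide)
  then have "w^3 dvd 4 * u^3"
    by (metis dvd_triv_right of_int_eq_iff)
  moreover have "coprime (w^3) (u^3)"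
    using cop by (simp add: coprime_commute)
  ultimately have "w^3 dvd 4"
    using coprime_dvd_mult_left_iff by blast
  then have "w^3 < 2^3"
    using zdvd_imp_le[of "w^3" 4] by simp
  then have "w = 1"
    using w power_less_imp_less_base[of w 3 2] by simp
  then show ?thesis
    by (simp add: r Fract_of_int_quotient)
qed

lemma qnorm_pos:
  assumes "a < 0" "b < 0" "x \<noteq> 0"
  shows "0 < qnorm a b x"
proof -
  define A B where "A = (of_int (- a) :: rat)" and "B = (of_int (- b) :: rat)"
  have AB: "0 < A" "0 < B" "0 < A * B"
    using assms(1,2) by (simp_all add: A_def B_def mult_neg_neg)
  have "qnorm a b x = (re x)^2 + A * (ci x)^2 + B * (cj x)^2 + A * B * (ck x)^2"
    by (simp add: qnorm_def A_def B_def)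
  moreover have "0 \<le> (re x)^2" "0 \<le> A * (ci x)^2" "0 \<le> B * (cj x)^2" "0 \<le> A * B * (ck x)^2"
    using AB by simp_all
  moreover have "0 < (re x)^2 \<or> 0 < A * (ci x)^2 \<or> 0 < B * (cj x)^2 \<or> 0 < A * B * (ck x)^2"
    using assms(3) AB by (auto simp: quat_eq_iff)
  ultimately show ?thesis
    by linarith
qed

context
  fixes a b :: int and Ord :: "quat set"
  assumes order: "is_order a b Ord"
begin

lemma order_basis:
  obtains vs where "lin_indep vs" "length vs = 4" "Ord = zspan vs"
  using order by (auto simp: is_order_def)

lemma order_one: "qone \<in> Ord"
  using order by (simp add: is_order_def)

lemma order_mult: "x \<in> Ord \<Longrightarrow> y \<in> Ord \<Longrightarrow> qmul a b x y \<in> Ord"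
  using order by (simp add: is_order_def)

lemma order_diff: "x \<in> Ord \<Longrightarrow> y \<in> Ord \<Longrightarrow> x - y \<in> Ord"
  by (rule order_basis) (simp add: zspan_diff)

lemma order_scale_of_int: "x \<in> Ord \<Longrightarrow> qscale (of_int k) x \<in> Ord"
  by (rule order_basis) (simp add: zspan_scale_of_int)

lemma order_of_int_scalar: "qscalar (of_int k) \<in> Ord"
proof -
  have "qscalar (of_int k) = qscale (of_int k) qone"
    by (simp add: quat_eq_iff)
  then show ?thesis
    using order_one order_scale_of_int by metis
qed

lemma order_four_re_Ints: "y \<in> Ord \<Longrightarrow> 4 * re y \<in> \<int>"
proof -
  assume y: "y \<in> Ord"
  obtain vs where vs: "lin_indep vs" "length vs = 4" "Ord = zspan vs"
    by (rule order_basis)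
  have "qmul a b y (vs!k) \<in> zspan vs" if "k < 4" for k
    using y vs that nth_in_zspan[of k vs] order_mult by simp
  then have "(\<Sum>k<4. coords vs (qmul a b y (vs!k)) k) \<in> \<int>"
    using coords_zspan_Ints[OF vs(1,2)] by (intro Ints_sum) simp
  then show ?thesis
    using trace_left_mult[OF vs(1,2)] by simp
qed

lemma order_scalar_Ints: "qscalar r \<in> Ord \<Longrightarrow> r \<in> \<int>"
proof -
  assume r: "qscalar r \<in> Ord"
  have "qscalar (r^3) = qmul a b (qscalar r) (qmul a b (qscalar r) (qscalar r))"
    by (simp add: quat_eq_iff qmul_def power3_eq_cube)
  then have "qscalar (r^3) \<in> Ord"
    using r order_mult by metis
  then have "4 * r^3 \<in> \<int>"
    using order_four_re_Ints by fastforce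
  then show ?thesis
    by (rule rat_Ints_if_four_cube_Ints)
qed

text \<open>With \<open>T = qtr x\<close> and \<open>N = qnorm a b x\<close>, we know \<open>2 T \<in> \<int>\<close>; the element
  \<open>(2 x) (2 T - 2 x) = 4 N\<close> of the order gives \<open>4 N \<in> \<int>\<close>, and then
  \<open>4 re (x\<^sup>2) = 2 T\<^sup>2 - 4 N \<in> \<int>\<close> forces \<open>T \<in> \<int>\<close>. Finally \<open>x (T - x) = N\<close>.\<close>
lemma order_qtr_qnorm_Ints:
  assumes x: "x \<in> Ord"
  shows "qtr x \<in> \<int>" "qnorm a b x \<in> \<int>"
proof -
  define T where "T = qtr x"
  define N where "N = qnorm a b x"
  obtain m where m: "2 * T = of_int m"
    using order_four_re_Ints[OF x] by (auto simp: T_def qtr_def elim!: Ints_cases)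
  have "qmul a b (qscale (of_int 2) x) (qscalar (of_int m) - qscale (of_int 2) x) = qscalar (4 * N)"
    using m by (simp add: quat_eq_iff qmul_def T_def N_def qtr_def qnorm_def power2_eq_square algebra_simps)
  moreover have "qmul a b (qscale (of_int 2) x) (qscalar (of_int m) - qscale (of_int 2) x) \<in> Ord"
    using x by (intro order_mult order_scale_of_int order_diff order_of_int_scalar)
  ultimately have "4 * N \<in> \<int>"
    using order_scalar_Ints by simp
  moreover have "4 * re (qmul a b x x) \<in> \<int>"
    using x by (intro order_four_re_Ints order_mult)
  moreover have "4 * re (qmul a b x x) = 2 * T^2 - 4 * N"
    by (simp add: qmul_def T_def N_def qtr_def qnorm_def power2_eq_square algebra_simps)
  ultimately have "2 * T^2 \<in> \<int>"
    by (metis Ints_add diff_add_cancel)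
  then obtain j where j: "2 * T^2 = of_int j"
    by (auto elim!: Ints_cases)
  have "(of_int (m^2) :: rat) = of_int (2 * j)"
    using j by (simp flip: m add: power_mult_distrib)
  then have "even (m^2)"
    by (simp only: of_int_eq_iff) simp
  then obtain k where "m = 2 * k"
    by (auto elim: evenE)
  then have T: "T = of_int k"
    using m by simp
  then show "qtr x \<in> \<int>"
    by (simp add: T_def)
  have "qmul a b x (qscalar T - x) = qscalar N"
    by (simp add: quat_eq_iff qmul_def T_def N_def qtr_def qnorm_def power2_eq_square algebra_simps)
  moreover have "qmul a b x (qscalar T - x) \<in> Ord"
    using x T order_of_int_scalar by (intro order_mult order_diff) simp_all
  ultimately show "qnorm a b x \<in> \<int>"
    using order_scalar_Ints N_def by metis
qed

lemma order_qnorm_ge_one: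
  assumes "a < 0" "b < 0" "x \<in> Ord" "x \<noteq> 0"
  shows "1 \<le> qnorm a b x"
  using Ints_less_imp_add_one_le[of 0 "qnorm a b x"] qnorm_pos[OF assms(1,2,4)]
    order_qtr_qnorm_Ints(2)[OF assms(3)] by simp

lemma gross_lattice_lift:
  assumes "\<delta> \<in> gross_lattice Ord"
  obtains \<gamma> where "\<gamma> \<in> Ord" "gross_map \<gamma> = \<delta>" "qtr \<gamma> \<in> {0, 1}"
proof -
  obtain x where x: "x \<in> Ord" "gross_map x = \<delta>"
    using assms by (auto simp: gross_lattice_def)
  obtain n where n: "qtr x = of_int n"
    using order_qtr_qnorm_Ints(1)[OF x(1)] by (auto elim!: Ints_cases)
  define \<gamma> where "\<gamma> = x - qscalar (of_int (n div 2))"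
  have "\<gamma> \<in> Ord"
    unfolding \<gamma>_def using x(1) by (intro order_diff order_of_int_scalar)
  moreover have "gross_map \<gamma> = \<delta>"
    using x(2) by (simp add: \<gamma>_def quat_eq_iff[of "gross_map _"])
  moreover have "qtr \<gamma> = of_int (n mod 2)"
    using n by (simp add: \<gamma>_def qtr_def minus_div_mult_eq_mod[symmetric] algebra_simps)
  moreover have "n mod 2 = 0 \<or> n mod 2 = 1"
    by presburger
  ultimately show thesis
    using that by auto
qed

lemma gross_minimal_iff:
  assumes \<alpha>: "\<alpha> \<in> Ord" "qtr \<alpha> \<in> {0, 1}"
  shows "(\<forall>\<delta>\<in>gross_lattice Ord. lin_indep (map gross_map xs @ [\<delta>]) \<longrightarrow>
            qnorm a b (gross_map \<alpha>) \<le> qnorm a b \<delta>) \<longleftrightarrow>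
    (\<forall>\<gamma>\<in>Ord. lin_indep (qone # xs @ [\<gamma>]) \<longrightarrow> qnorm a b \<alpha> \<le> qnorm a b \<gamma>) \<and>
    (qtr \<alpha> = 0 \<longrightarrow> (\<forall>\<gamma>\<in>Ord. qnorm a b \<gamma> = qnorm a b \<alpha> \<and> lin_indep (qone # xs @ [\<gamma>]) \<longrightarrow> qtr \<gamma> = 0))"
    (is "?gross \<longleftrightarrow> ?min \<and> ?tie")
proof -
  let ?N = "qnorm a b"
  have N_int: "?N x \<in> \<int>" if "x \<in> Ord" for x
    using order_qtr_qnorm_Ints(2)[OF that] .
  have gross_\<alpha>: "?N (gross_map \<alpha>) = 4 * ?N \<alpha> - qtr \<alpha>"
    using \<alpha>(2) by (auto simp: gross_map_qnorm)
  have indep_iff: "lin_indep (map gross_map xs @ [gross_map \<gamma>]) \<longleftrightarrow> lin_indep (qone # xs @ [\<gamma>])" for \<gamma>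
    by (simp add: lin_indep_one_Cons_iff)
  show ?thesis
  proof
    assume gross: ?gross
    have bound: "4 * ?N \<alpha> - qtr \<alpha> \<le> 4 * ?N \<gamma> - (qtr \<gamma>)^2"
      if "\<gamma> \<in> Ord" "lin_indep (qone # xs @ [\<gamma>])" for \<gamma>
      using gross that indep_iff gross_\<alpha> by (force simp: gross_lattice_def gross_map_qnorm)
    have ?min
    proof (intro ballI impI)
      fix \<gamma> assume \<gamma>: "\<gamma> \<in> Ord" "lin_indep (qone # xs @ [\<gamma>])"
      have "qtr \<alpha> \<le> 1"
        using \<alpha>(2) by auto
      then have "4 * ?N \<alpha> - 1 \<le> 4 * ?N \<gamma>"
        using bound[OF \<gamma>] zero_le_power2[of "qtr \<gamma>"] by linarith
      then show "?N \<alpha> \<le> ?N \<gamma>"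
        using Ints_less_imp_add_one_le[OF N_int[OF \<gamma>(1)] N_int[OF \<alpha>(1)]] by linarith
    qed
    moreover have ?tie
    proof (intro impI ballI, elim conjE)
      fix \<gamma> assume "qtr \<alpha> = 0" "\<gamma> \<in> Ord" "?N \<gamma> = ?N \<alpha>" "lin_indep (qone # xs @ [\<gamma>])"
      then have "(qtr \<gamma>)^2 \<le> 0"
        using bound by fastforce
      then show "qtr \<gamma> = 0"
        by simp
    qed
    ultimately show "?min \<and> ?tie" ..
  next
    assume "?min \<and> ?tie"
    then have min: ?min and tie: ?tie by blast+
    show ?gross
    proof (intro ballI impI)
      fix \<delta> assume \<delta>: "\<delta> \<in> gross_lattice Ord" "lin_indep (map gross_map xs @ [\<delta>])"
      obtain \<gamma> where \<gamma>: "\<gamma> \<in> Ord" "gross_map \<gamma> = \<delta>" "qtr \<gamma> \<in> {0, 1}"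
        using gross_lattice_lift[OF \<delta>(1)] .
      have indep: "lin_indep (qone # xs @ [\<gamma>])"
        using \<delta>(2) \<gamma>(2) indep_iff by blast
      have "?N \<delta> = 4 * ?N \<gamma> - qtr \<gamma>"
        using \<gamma> by (auto simp: gross_map_qnorm)
      moreover have "?N \<alpha> \<le> ?N \<gamma>"
        using min \<gamma>(1) indep by blast
      moreover have "?N \<alpha> + 1 \<le> ?N \<gamma>" if "?N \<alpha> < ?N \<gamma>"
        using Ints_less_imp_add_one_le[OF N_int N_int] \<alpha>(1) \<gamma>(1) that by blast
      moreover have "qtr \<gamma> = 0" if "qtr \<alpha> = 0" "?N \<gamma> = ?N \<alpha>"
        using tie \<gamma>(1) indep that by blast
      ultimately show "?N (gross_map \<alpha>) \<le> ?N \<delta>"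
        using gross_\<alpha> \<alpha>(2) \<gamma>(3) by fastforce
    qed
  qed
qed

theorem gross_attains_succ_min_iff:
  assumes definite: "a < 0" "b < 0"
    and al: "set al \<subseteq> Ord" "\<forall>\<alpha>\<in>set al. qtr \<alpha> \<in> {0, 1}" "lin_indep (map gross_map al)"
  shows "attains_succ_min (qnorm a b) (gross_lattice Ord) (length al) (map gross_map al) \<longleftrightarrow>
    attains_succ_min (qnorm a b) Ord (Suc (length al)) (qone # al) \<and>
    (\<forall>i<length al. qtr (al!i) = 0 \<longrightarrow> (\<forall>\<gamma>\<in>Ord. qnorm a b \<gamma> = qnorm a b (al!i) \<and>
        lin_indep (qone # take i al @ [\<gamma>]) \<longrightarrow> qtr \<gamma> = 0))"
    (is "?gross \<longleftrightarrow> ?ord \<and> (\<forall>i<_. ?tie i)")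
proof -
  let ?N = "qnorm a b" and ?n = "length al"
  let ?gross_min = "\<lambda>i. \<forall>\<delta>\<in>gross_lattice Ord. lin_indep (take i (map gross_map al) @ [\<delta>]) \<longrightarrow>
      ?N (map gross_map al ! i) \<le> ?N \<delta>"
  let ?ord_min = "\<lambda>i. \<forall>\<gamma>\<in>Ord. lin_indep (take i (qone # al) @ [\<gamma>]) \<longrightarrow> ?N ((qone # al) ! i) \<le> ?N \<gamma>"
  have "set (map gross_map al) \<subseteq> gross_lattice Ord"
    using al(1) by (auto simp: gross_lattice_def)
  then have "?gross \<longleftrightarrow> (\<forall>i<?n. ?gross_min i)"
    using al(3) unfolding attains_succ_min_iff_greedy by simp
  also have "\<dots> \<longleftrightarrow> (\<forall>i<?n. ?ord_min (Suc i) \<and> ?tie i)"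
  proof -
    have "?gross_min i \<longleftrightarrow> ?ord_min (Suc i) \<and> ?tie i" if "i < ?n" for i
    proof -
      have "al!i \<in> Ord" "qtr (al!i) \<in> {0, 1}"
        using al(1,2) that nth_mem by auto
      then show ?thesis
        using gross_minimal_iff[of "al!i" "take i al"] that by (simp add: take_map)
    qed
    then show ?thesis
      by blast
  qed
  also have "\<dots> \<longleftrightarrow> ?ord \<and> (\<forall>i<?n. ?tie i)"
  proof -
    have "?ord_min 0"
      using order_qnorm_ge_one[OF definite] lin_indep_nonzero by (simp add: qnorm_def)
    moreover have "set (qone # al) \<subseteq> Ord" "lin_indep (qone # al)"
      using al(1,3) order_one lin_indep_one_Cons_iff by auto
    ultimately have "?ord \<longleftrightarrow> (\<forall>i<?n. ?ord_min (Suc i))"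
      unfolding attains_succ_min_iff_greedy All_less_Suc2 by simp
    then show ?thesis
      by blast
  qed
  finally show ?thesis .
qed

end

theorem lemma3p7:
  fixes p :: nat and a b :: int and Ord :: "quat set" and alpha beta :: "nat \<Rightarrow> quat"
  assumes "prime p"
    and "is_Bp p a b"
    and "is_order a b Ord"
    and "\<forall>i\<in>{1,2,3}. beta i \<in> gross_lattice Ord"
    and "lin_indep [beta 1, beta 2, beta 3]"
    and "\<forall>i\<in>{1,2,3}. alpha i \<in> Ord \<and> gross_map (alpha i) = beta i \<and> qtr (alpha i) \<in> {0, 1}"
  shows "attains_succ_min (qnorm a b) (gross_lattice Ord) 3 [beta 1, beta 2, beta 3] \<longleftrightarrow>
    (attains_succ_min (qnorm a b) Ord 4 [qone, alpha 1, alpha 2, alpha 3] \<and>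
     (\<forall>i\<in>{1,2,3}. qtr (alpha i) = 0 \<longrightarrow>
        (\<forall>\<gamma>\<in>Ord. qnorm a b \<gamma> = qnorm a b (alpha i) \<and>
                 lin_indep (qone # map alpha [1..<i] @ [\<gamma>]) \<longrightarrow> qtr \<gamma> = 0)))"
proof -
  have definite: "a < 0" "b < 0"
    using assms(2) by (auto simp: is_Bp_def ramified_infty_def)
  define al where "al = [alpha 1, alpha 2, alpha 3]"
  have betas: "map gross_map al = [beta 1, beta 2, beta 3]"
    using assms(6) by (simp add: al_def)
  have al: "set al \<subseteq> Ord" "\<forall>\<alpha>\<in>set al. qtr \<alpha> \<in> {0, 1}"
    using assms(6) by (auto simp: al_def)
  show ?thesis
    using gross_attains_succ_min_iff[OF assms(3) definite al, unfolded betas] assms(5)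
    by (simp add: al_def All_less_Suc2 eval_nat_numeral upt_rec)
qed

end
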